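(* Let $p>2$ be a prime and let $\mathrm{GF}(p)=\{0,1,\dots,p-1\}$ be the prime field. Let $J\ge 1$ and let $C_1,\dots,C_J$ be $J$ pairwise disjoint additive inverse element pairs (AIEPs) over $\mathrm{GF}(p)$, i.e. $C_i=(a_i,\,p-a_i)$ with $a_i\in\mathrm{GF}(p)\setminus\{0\}$ and the sets $\{a_i,p-a_i\}$, $1\le i\le J$, pairwise disjoint. Consider the Cartesian product $\Psi=C_1\times C_2\times\cdots\times C_J$, whose elements (codewords) are the $2^J$ tuples $(u_1,\dots,u_J)$ with $u_i\in\{a_i,p-a_i\}$. Then $\Psi$ is a $J$-user uniquely decodable AIEP (UD-AIEP) code, i.e. the map $(u_1,\dots,u_J)\mapsto \bigoplus_{i=1}^J u_i$ (sum modulo $p$) is injective on $\Psi$, if and only if the finite-field sum-patterns $\bigoplus_{i=1}^J u_i$ of all $2^J$ codewords of $\Psi$ are pairwise distinct nonzero elements of $\mathrm{GF}(p)$; and in that case $J\le \log_2(p-1)$.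
   Context: An additive inverse element pair (AIEP) over $\mathrm{GF}(p)$ is an ordered pair $(j,p-j)$ consisting of a nonzero element $j$ and its additive inverse $p-j$; since $p>2$, $j\neq p-j$. For a tuple $(u_1,\dots,u_J)$ of field elements, its finite-field sum-pattern (FFSP) is the modulo-$p$ sum $\bigoplus_{i=1}^J u_i\in\mathrm{GF}(p)$. The Cartesian product $C_1\times\cdots\times C_J$ is said to have the unique sum-pattern mapping (USPM) property, and is then called a $J$-user UD-AIEP code, if distinct tuples in it have distinct FFSPs. *)

theory Defs
  imports Complex_Main "HOL-Computational_Algebra.Primes" "HOL-Library.FuncSet"
begin

text \<open>GF(p) is modelled as {0..<p} :: nat set with arithmetic mod p.
  The AIEP C_i is (a_i, p - a_i); a codeword of C_1 x ... x C_J is a function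
  u on the index set {1..J} (extensional, i.e. undefined outside) with
  u i \<in> {a i, p - a i}.\<close>

definition AIEP_set :: "nat \<Rightarrow> nat \<Rightarrow> nat set" where
  "AIEP_set p j = {j, p - j}"

definition codewords :: "nat \<Rightarrow> nat \<Rightarrow> (nat \<Rightarrow> nat) \<Rightarrow> (nat \<Rightarrow> nat) set" where
  "codewords p J a = PiE {1..J} (\<lambda>i. AIEP_set p (a i))"

definition ffsp :: "nat \<Rightarrow> nat \<Rightarrow> (nat \<Rightarrow> nat) \<Rightarrow> nat" where
  "ffsp p J u = (\<Sum>i=1..J. u i) mod p"

definition UD_AIEP :: "nat \<Rightarrow> nat \<Rightarrow> (nat \<Rightarrow> nat) \<Rightarrow> bool" where
  "UD_AIEP p J a = inj_on (ffsp p J) (codewords p J a)"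

end

theory Submission
  imports Defs
begin

text \<open>Negating every coordinate of a codeword gives another codeword, different from the first
  because p is odd, and the two sum patterns add up to J p \<equiv> 0. So a codeword with sum
  pattern 0 would collide with its negation, and unique decodability forces all 2^J sum
  patterns into the p - 1 nonzero elements of GF(p).\<close>

lemma card_AIEP_set:
  assumes "odd p"
  shows "card (AIEP_set p j) = 2"
proof -
  have "j \<noteq> p - j"
    using assms by presburger
  then show ?thesis
    unfolding AIEP_set_def by simp
qed

lemma card_codewords:
  assumes "odd p"
  shows "card (codewords p J a) = 2 ^ J"
  unfolding codewords_def by (simp add: card_PiE card_AIEP_set[OF assms])

definition negate_codeword :: "nat \<Rightarrow> nat \<Rightarrow> (nat \<Rightarrow> nat) \<Rightarrow> nat \<Rightarrow> nat" where
  "negate_codeword p J u = (\<lambda>i\<in>{1..J}. p - u i)"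

lemma codeword_le:
  assumes "u \<in> codewords p J a" "i \<in> {1..J}" "a i \<le> p"
  shows "u i \<le> p"
proof -
  have "u i \<in> {a i, p - a i}"
    using assms(1,2) unfolding codewords_def AIEP_set_def by (rule PiE_mem)
  with assms(3) show ?thesis
    by auto
qed

lemma negate_codeword_in_codewords:
  assumes "u \<in> codewords p J a" and "\<forall>i\<in>{1..J}. a i \<le> p"
  shows "negate_codeword p J u \<in> codewords p J a"
  using assms unfolding codewords_def AIEP_set_def negate_codeword_def PiE_iff
  by (auto simp: diff_diff_cancel)

lemma negate_codeword_neq:
  assumes "odd p" "J \<ge> 1"
  shows "negate_codeword p J u \<noteq> u"
proof
  assume "negate_codeword p J u = u"
  then have "p - u 1 = u 1"
    using assms(2) unfolding negate_codeword_def by (metis atLeastAtMost_iff order_refl restrict_apply')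
  with assms(1) show False
    by presburger
qed

lemma ffsp_negate_codeword_eq_0:
  assumes u: "u \<in> codewords p J a" and a_le: "\<forall>i\<in>{1..J}. a i \<le> p"
    and zero: "ffsp p J u = 0"
  shows "ffsp p J (negate_codeword p J u) = 0"
proof -
  let ?v = "negate_codeword p J u"
  have "(\<Sum>i=1..J. ?v i) + (\<Sum>i=1..J. u i) = J * p"
    unfolding sum.distrib[symmetric]
    using codeword_le[OF u] a_le by (simp add: negate_codeword_def)
  moreover have "p dvd (\<Sum>i=1..J. u i)"
    using zero unfolding ffsp_def by auto
  ultimately have "p dvd (\<Sum>i=1..J. ?v i)"
    by (metis dvd_add_left_iff dvd_triv_right)
  then show ?thesis
    unfolding ffsp_def by simp
qed

lemma UD_AIEP_ffsp_nonzero: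
  assumes "odd p" "J \<ge> 1" "\<forall>i\<in>{1..J}. a i \<le> p"
    and ud: "UD_AIEP p J a" and u: "u \<in> codewords p J a"
  shows "ffsp p J u \<noteq> 0"
proof
  assume zero: "ffsp p J u = 0"
  have "negate_codeword p J u = u"
    using ud negate_codeword_in_codewords[OF u assms(3)] u
      ffsp_negate_codeword_eq_0[OF u assms(3) zero] zero
    unfolding UD_AIEP_def by (metis inj_onD)
  with negate_codeword_neq[OF assms(1,2)] show False
    by blast
qed

lemma UD_AIEP_card_le:
  assumes "odd p" "J \<ge> 1" "\<forall>i\<in>{1..J}. a i \<le> p" and ud: "UD_AIEP p J a"
  shows "2 ^ J \<le> p - 1"
proof -
  have "2 ^ J = card (ffsp p J ` codewords p J a)"
    using ud card_codewords[OF assms(1)] unfolding UD_AIEP_def by (simp add: card_image)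
  also have "\<dots> \<le> card {1..<p}"
  proof (rule card_mono)
    show "ffsp p J ` codewords p J a \<subseteq> {1..<p}"
      using UD_AIEP_ffsp_nonzero[OF assms] \<open>odd p\<close> unfolding ffsp_def
      by (auto simp: odd_pos Suc_le_eq)
  qed simp
  finally show ?thesis
    by simp
qed

theorem theorem1:
  fixes p J :: nat and a :: "nat \<Rightarrow> nat"
  assumes "prime p" and "p > 2" and "J \<ge> 1"
    and "\<forall>i\<in>{1..J}. 0 < a i \<and> a i < p"
    and "\<forall>i\<in>{1..J}. \<forall>j\<in>{1..J}. i \<noteq> j \<longrightarrow> AIEP_set p (a i) \<inter> AIEP_set p (a j) = {}"
  shows "(UD_AIEP p J a \<longleftrightarrow>
            (inj_on (ffsp p J) (codewords p J a) \<and> (\<forall>u\<in>codewords p J a. ffsp p J u \<noteq> 0)))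
         \<and> (UD_AIEP p J a \<longrightarrow> real J \<le> log 2 (real p - 1))"
proof -
  have odd: "odd p"
    using assms(1,2) prime_odd_nat by blast
  have a_le: "\<forall>i\<in>{1..J}. a i \<le> p"
    using assms(4) by auto
  have "real J \<le> log 2 (real p - 1)" if "UD_AIEP p J a"
  proof -
    have "real J \<le> log 2 (real (p - 1))"
      using le_log2_of_power UD_AIEP_card_le[OF odd assms(3) a_le that] by blast
    then show ?thesis
      using assms(2) by (simp add: of_nat_diff)
  qed
  then show ?thesis
    using UD_AIEP_ffsp_nonzero[OF odd assms(3) a_le] unfolding UD_AIEP_def by blast
qed

end
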